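(* Let $A$ be an $m\times m$ coloring matrix, let $m'\ge1$, and let $A'$ be the $(m+m')\times(m+m')$ block matrix $$A'=\left[\begin{array}{c|c}A&0\\\hline \mathbf{1}&0\end{array}\right],$$ where $\mathbf{1}$ is the $m'\times m$ all-ones matrix and the $0$ blocks are zero matrices. Then $$F_{A'}(x)=F_A(x)+\frac{m'x}{1-F_A(x)}.$$
   Context: A plane tree is an unlabeled rooted tree in which the children of every vertex are linearly ordered. A coloring matrix is a square matrix $A=(a_{ij})$ with entries in $\{0,1\}$. An $A$-coloring of a plane tree assigns to each vertex a color (an index of a row of $A$) such that whenever a vertex of color $j$ is a child of a vertex of color $i$, $a_{ij}=1$. Let $t_A(n)$ be the number of pairs (plane tree with $n$ vertices, $A$-coloring of it), and $F_A(x)=\sum_{n\ge1}t_A(n)x^n$ (formal power series). *)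

theory Defs
  imports "HOL-Computational_Algebra.Formal_Power_Series"
begin

datatype ptree = Node "ptree list"

fun tsize :: "ptree \<Rightarrow> nat" where
  "tsize (Node ts) = Suc (sum_list (map tsize ts))"

text \<open>Vertices of a plane tree, addressed by their path from the root
  (list of child indices).\<close>
function vertices :: "ptree \<Rightarrow> nat list set" where
  "vertices (Node ts) = insert [] (\<Union>i<length ts. (\<lambda>p. i # p) ` vertices (ts ! i))"
  by pat_completeness auto
termination
  by (relation "measure size") (auto intro: size_list_estimation' nth_mem less_SucI simp: less_Suc_eq_le)

text \<open>A coloring matrix is given by its entries A i j \<in> {0,1} for
  i, j < m; colors are 0..<m.\<close>
definition is_coloring :: "(nat \<Rightarrow> nat \<Rightarrow> nat) \<Rightarrow> nat \<Rightarrow> ptree \<Rightarrow> (nat list \<Rightarrow> nat) \<Rightarrow> bool" where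
  "is_coloring A m T c \<longleftrightarrow>
     (\<forall>p\<in>vertices T. c p < m) \<and>
     (\<forall>p i. p \<in> vertices T \<longrightarrow> p @ [i] \<in> vertices T \<longrightarrow> A (c p) (c (p @ [i])) = 1) \<and>
     (\<forall>p. p \<notin> vertices T \<longrightarrow> c p = 0)"

text \<open>t_A(n): number of pairs (plane tree with n vertices, A-coloring of it);
  colorings are taken extensional (value 0 off the vertex set).\<close>
definition tA :: "(nat \<Rightarrow> nat \<Rightarrow> nat) \<Rightarrow> nat \<Rightarrow> nat \<Rightarrow> nat" where
  "tA A m n = card {(T, c). tsize T = n \<and> is_coloring A m T c}"

definition FA :: "(nat \<Rightarrow> nat \<Rightarrow> nat) \<Rightarrow> nat \<Rightarrow> rat fps" where
  "FA A m = Abs_fps (\<lambda>n. of_nat (tA A m n))"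

text \<open>Block matrix [[A, 0], [1, 0]] of size (m + m') x (m + m').\<close>
definition block_ext :: "(nat \<Rightarrow> nat \<Rightarrow> nat) \<Rightarrow> nat \<Rightarrow> nat \<Rightarrow> nat \<Rightarrow> nat" where
  "block_ext A m i j = (if i < m \<and> j < m then A i j else if m \<le> i \<and> j < m then 1 else 0)"

end

theory Submission
  imports Defs
begin

text \<open>
  Under A', the children of a vertex of one of the m' new colours may have any old colour and
  no new one, while an old colour never has a child of a new colour. Hence an A'-coloured tree
  is either an A-coloured tree, or a root of a new colour carrying a sequence of A-coloured
  subtrees. Detaching the first subtree shows that, for each new root colour, the generating
  function H of the latter trees satisfies H = x + F_A H, i.e. H = x / (1 - F_A).
\<close>

unbundle fps_syntax

lemma Nil_in_vertices [simp]: "[] \<in> vertices T"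
  by (cases T) simp

lemma Cons_in_vertices_Node [simp]:
  "i # p \<in> vertices (Node ts) \<longleftrightarrow> i < length ts \<and> p \<in> vertices (ts ! i)"
  by auto

declare vertices.simps [simp del]

lemma vertices_snocD: "p @ [i] \<in> vertices T \<Longrightarrow> p \<in> vertices T"
proof (induction p arbitrary: T)
  case (Cons j p)
  then show ?case by (cases T) auto
qed simp

lemma is_coloring_Node:
  "is_coloring B M (Node ts) c \<longleftrightarrow> c [] < M \<and>
     (\<forall>i<length ts. B (c []) (c [i]) = 1 \<and> is_coloring B M (ts ! i) (\<lambda>p. c (i # p))) \<and>
     (\<forall>i q. length ts \<le> i \<longrightarrow> c (i # q) = 0)" (is "?col \<longleftrightarrow> ?rec")
proof
  assume ?col
  then show ?rec
    unfolding is_coloring_def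
    by (intro conjI allI impI; simp;
        metis Cons_in_vertices_Node Nil_in_vertices append_Cons append_Nil not_le)
next
  assume rec: ?rec
  show ?col
    unfolding is_coloring_def
  proof (intro conjI allI impI ballI)
    fix p
    show "p \<in> vertices (Node ts) \<Longrightarrow> c p < M"
      using rec unfolding is_coloring_def by (cases p) auto
    show "p \<notin> vertices (Node ts) \<Longrightarrow> c p = 0"
      using rec unfolding is_coloring_def by (cases p) (auto, metis not_le)
    fix i
    show "p \<in> vertices (Node ts) \<Longrightarrow> p @ [i] \<in> vertices (Node ts) \<Longrightarrow>
        B (c p) (c (p @ [i])) = 1"
      using rec unfolding is_coloring_def by (cases p) auto
  qed
qed

lemma is_coloring_root_less: "is_coloring B M T c \<Longrightarrow> c [] < M"
  by (simp add: is_coloring_def)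

type_synonym colored_tree = "ptree \<times> (nat list \<Rightarrow> nat)"

definition leaf :: "nat \<Rightarrow> colored_tree" where
  "leaf r = (Node [], \<lambda>p. if p = [] then r else 0)"

definition first_child_col :: "(nat list \<Rightarrow> nat) \<Rightarrow> nat list \<Rightarrow> nat" where
  "first_child_col c = (\<lambda>p. c (0 # p))"

definition other_children_col :: "(nat list \<Rightarrow> nat) \<Rightarrow> nat list \<Rightarrow> nat" where
  "other_children_col c = (\<lambda>p. case p of [] \<Rightarrow> c [] | i # q \<Rightarrow> c (Suc i # q))"

definition graft_col :: "(nat list \<Rightarrow> nat) \<Rightarrow> (nat list \<Rightarrow> nat) \<Rightarrow> nat list \<Rightarrow> nat" where
  "graft_col c1 c2 = (\<lambda>p. case p of [] \<Rightarrow> c2 [] | 0 # q \<Rightarrow> c1 q | Suc i # q \<Rightarrow> c2 (i # q))"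

fun graft :: "colored_tree \<Rightarrow> colored_tree \<Rightarrow> colored_tree" where
  "graft (t, c1) (Node ts, c2) = (Node (t # ts), graft_col c1 c2)"

lemma graft_col_Nil [simp]: "graft_col c1 c2 [] = c2 []"
  by (simp add: graft_col_def)

lemma first_child_col_graft_col [simp]: "first_child_col (graft_col c1 c2) = c1"
  by (simp add: first_child_col_def graft_col_def)

lemma other_children_col_graft_col [simp]: "other_children_col (graft_col c1 c2) = c2"
  by (auto simp: other_children_col_def graft_col_def fun_eq_iff split: list.split)

lemma graft_col_split: "graft_col (first_child_col c) (other_children_col c) = c"
  by (auto simp: first_child_col_def other_children_col_def graft_col_def fun_eq_iff
      split: list.split nat.split)

lemma graft_inject [simp]: "graft x y = graft x' y' \<longleftrightarrow> x = x' \<and> y = y'"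
proof
  assume "graft x y = graft x' y'"
  then show "x = x' \<and> y = y'"
    by (cases "(x, y)" rule: graft.cases; cases "(x', y')" rule: graft.cases)
      (simp, metis first_child_col_graft_col other_children_col_graft_col)
qed simp

lemma leaf_neq_graft [simp]: "leaf r \<noteq> graft x y"
  by (cases "(x, y)" rule: graft.cases) (simp add: leaf_def)

lemma is_coloring_graft:
  "is_coloring B M (Node (t # ts)) (graft_col c1 c2) \<longleftrightarrow>
     is_coloring B M t c1 \<and> is_coloring B M (Node ts) c2 \<and> B (c2 []) (c1 []) = 1"
proof -
  have shift_ge: "(\<forall>i\<ge>Suc n. P i) \<longleftrightarrow> (\<forall>i\<ge>n. P (Suc i))" for n and P :: "nat \<Rightarrow> bool"
    by (metis Suc_le_D Suc_le_mono)
  show ?thesis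
    unfolding is_coloring_Node[of B M "t # ts"] is_coloring_Node[of B M ts]
    by (simp only: length_Cons All_less_Suc2 shift_ge nth_Cons_0 nth_Cons_Suc)
      (auto simp: graft_col_def split: nat.split)
qed

lemma colored_tree_cases:
  assumes "is_coloring B M T c"
  obtains "(T, c) = leaf (c [])"
  | t c1 ts c2 where "(T, c) = graft (t, c1) (Node ts, c2)"
      "is_coloring B M t c1" "is_coloring B M (Node ts) c2" "B (c2 []) (c1 []) = 1"
proof -
  obtain us where T: "T = Node us"
    by (cases T)
  show thesis
  proof (cases us)
    case Nil
    with assms T have "(T, c) = leaf (c [])"
      by (auto simp: leaf_def is_coloring_Node fun_eq_iff neq_Nil_conv)
    then show thesis ..
  next
    case (Cons t ts)
    then have "(T, c) = graft (t, first_child_col c) (Node ts, other_children_col c)"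
      by (simp add: T graft_col_split)
    moreover from assms have
      "is_coloring B M (Node (t # ts)) (graft_col (first_child_col c) (other_children_col c))"
      by (simp add: T Cons graft_col_split)
    ultimately show thesis
      using that(2) by (simp only: is_coloring_graft)
  qed
qed

lemma tsize_graft [simp]: "tsize (fst (graft (t, c1) (T, c2))) = tsize t + tsize T"
  by (cases T) simp

lemma tsize_pos: "0 < tsize T"
  by (cases T) simp

definition colored_trees :: "(nat \<Rightarrow> nat \<Rightarrow> nat) \<Rightarrow> nat \<Rightarrow> nat \<Rightarrow> colored_tree set" where
  "colored_trees B M n = {(T, c). tsize T = n \<and> is_coloring B M T c}"

definition rooted_colored_trees :: "(nat \<Rightarrow> nat \<Rightarrow> nat) \<Rightarrow> nat \<Rightarrow> nat \<Rightarrow> nat \<Rightarrow> colored_tree set" where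
  "rooted_colored_trees B M r n = {(T, c). tsize T = n \<and> is_coloring B M T c \<and> c [] = r}"

lemma leaf_in_rooted_colored_trees: "r < M \<Longrightarrow> leaf r \<in> rooted_colored_trees B M r 1"
  by (simp add: rooted_colored_trees_def leaf_def is_coloring_Node)

lemma tA_eq_card: "tA B M n = card (colored_trees B M n)"
  by (simp add: tA_def colored_trees_def)

lemma colored_trees_0: "colored_trees B M 0 = {}"
  by (auto simp: colored_trees_def tsize_pos)

lemma colored_trees_subset_grafts:
  "colored_trees B M n \<subseteq> leaf ` {..<M} \<union>
     case_prod graft ` (\<Union>k\<in>{1..<n}. colored_trees B M k \<times> colored_trees B M (n - k))"
    (is "_ \<subseteq> _ \<union> ?grafts")
proof clarify
  fix T c
  assume "(T, c) \<in> colored_trees B M n"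
    and not_graft: "(T, c) \<notin> ?grafts"
  then have n: "tsize T = n" and col: "is_coloring B M T c"
    by (auto simp: colored_trees_def)
  from col show "(T, c) \<in> leaf ` {..<M}"
  proof (cases rule: colored_tree_cases)
    case 1
    then show ?thesis
      using is_coloring_root_less[OF col] by blast
  next
    case (2 t c1 ts c2)
    then have "T = Node (t # ts)"
      by simp
    with 2 n have
      "((t, c1), (Node ts, c2)) \<in> colored_trees B M (tsize t) \<times> colored_trees B M (n - tsize t)"
      and "tsize t \<in> {1..<n}"
      using tsize_pos[of t] tsize_pos[of "Node ts"] by (auto simp: colored_trees_def)
    with 2 have "(T, c) \<in> ?grafts"
      by (auto intro!: image_eqI[where x = "((t, c1), (Node ts, c2))"])
    with not_graft show ?thesis
      by contradiction
  qed
qed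

lemma finite_colored_trees: "finite (colored_trees B M n)"
proof (induction n rule: less_induct)
  case (less n)
  show ?case
    by (rule finite_subset[OF colored_trees_subset_grafts])
      (auto intro!: finite_imageI finite_cartesian_product less)
qed

lemma finite_rooted_colored_trees: "finite (rooted_colored_trees B M r n)"
  by (rule finite_subset[OF _ finite_colored_trees[of B M n]])
    (auto simp: rooted_colored_trees_def colored_trees_def)

lemma block_ext_coloring_colors_less:
  assumes col: "is_coloring (block_ext A m) M T c" and root: "c [] < m"
  shows "p \<in> vertices T \<Longrightarrow> c p < m"
proof (induction p rule: rev_induct)
  case (snoc i p)
  then have "c p < m"
    by (blast dest: vertices_snocD)
  moreover have "block_ext A m (c p) (c (p @ [i])) = 1"
    using col snoc.prems vertices_snocD[OF snoc.prems] by (simp add: is_coloring_def)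
  ultimately show ?case
    by (simp add: block_ext_def split: if_splits)
qed (use root in simp)

lemma is_coloring_block_ext_iff:
  assumes "m \<le> M"
  shows "is_coloring (block_ext A m) M T c \<and> c [] < m \<longleftrightarrow> is_coloring A m T c"
proof
  assume col: "is_coloring (block_ext A m) M T c \<and> c [] < m"
  then have "\<forall>p\<in>vertices T. c p < m"
    using block_ext_coloring_colors_less by blast
  with col show "is_coloring A m T c"
    unfolding is_coloring_def block_ext_def by auto
next
  assume col: "is_coloring A m T c"
  then have "\<forall>p\<in>vertices T. c p < m"
    by (simp add: is_coloring_def)
  with col assms show "is_coloring (block_ext A m) M T c \<and> c [] < m"
    unfolding is_coloring_def block_ext_def by auto
qed

lemma is_coloring_block_ext_graft:
  assumes "m \<le> c2 []" "m \<le> M"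
  shows "is_coloring (block_ext A m) M (Node (t # ts)) (graft_col c1 c2) \<longleftrightarrow>
     is_coloring A m t c1 \<and> is_coloring (block_ext A m) M (Node ts) c2"
  using assms is_coloring_block_ext_iff[of m M A t c1]
  by (auto simp: is_coloring_graft block_ext_def)

lemma rooted_block_ext_trees_eq:
  assumes "m \<le> r" "r < M"
  shows "rooted_colored_trees (block_ext A m) M r n =
    (if n = 1 then {leaf r} else {}) \<union>
    case_prod graft ` (\<Union>k\<le>n. colored_trees A m k \<times> rooted_colored_trees (block_ext A m) M r (n - k))"
    (is "?H n = ?leaves \<union> ?grafts")
proof
  show "?H n \<subseteq> ?leaves \<union> ?grafts"
  proof clarify
    fix T c
    assume "(T, c) \<in> ?H n" and not_graft: "(T, c) \<notin> ?grafts"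
    then have n: "tsize T = n" and col: "is_coloring (block_ext A m) M T c"
      and root: "c [] = r"
      by (auto simp: rooted_colored_trees_def)
    from col show "(T, c) \<in> ?leaves"
    proof (cases rule: colored_tree_cases)
      case 1
      with n root show ?thesis
        by (auto simp: leaf_def)
    next
      case (2 t c1 ts c2)
      then have T: "T = Node (t # ts)" and c: "c = graft_col c1 c2"
        by simp_all
      with root have "c2 [] = r"
        by simp
      with 2 T c n col assms have mem: "((t, c1), (Node ts, c2)) \<in>
          colored_trees A m (tsize t) \<times> rooted_colored_trees (block_ext A m) M r (n - tsize t)"
        by (auto simp: colored_trees_def rooted_colored_trees_def is_coloring_block_ext_graft)
      moreover have "tsize t \<le> n"
        using n T by simp
      ultimately have "(T, c) \<in> ?grafts"
        using 2(1) mem by (auto intro!: image_eqI[where x = "((t, c1), (Node ts, c2))"])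
      with not_graft show ?thesis
        by contradiction
    qed
  qed
next
  have "leaf r \<in> ?H 1"
    using assms(2) by (rule leaf_in_rooted_colored_trees)
  moreover have "graft (t, c1) (T, c2) \<in> ?H n"
    if "k \<le> n" "(t, c1) \<in> colored_trees A m k" "(T, c2) \<in> ?H (n - k)" for k t c1 T c2
  proof -
    obtain ts where T: "T = Node ts"
      by (cases T)
    from that T have "c2 [] = r" "tsize t = k" "tsize T = n - k" "is_coloring A m t c1"
      "is_coloring (block_ext A m) M (Node ts) c2"
      by (auto simp: colored_trees_def rooted_colored_trees_def)
    with that(1) T assms show ?thesis
      by (auto simp: rooted_colored_trees_def is_coloring_block_ext_graft)
  qed
  ultimately show "?leaves \<union> ?grafts \<subseteq> ?H n"
    by auto
qed

lemma card_rooted_block_ext_trees: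
  assumes "m \<le> r" "r < M"
  shows "card (rooted_colored_trees (block_ext A m) M r n) = (if n = 1 then 1 else 0) +
    (\<Sum>k\<le>n. card (colored_trees A m k) *
      card (rooted_colored_trees (block_ext A m) M r (n - k)))"
proof -
  let ?pairs = "\<lambda>k. colored_trees A m k \<times> rooted_colored_trees (block_ext A m) M r (n - k)"
  have disjoint: "?pairs k \<inter> ?pairs l = {}" if "k \<noteq> l" for k l
    using that by (auto simp: colored_trees_def)
  have fin: "finite (\<Union>k\<le>n. ?pairs k)"
    by (simp add: finite_colored_trees finite_rooted_colored_trees)
  have "card (case_prod graft ` (\<Union>k\<le>n. ?pairs k)) = card (\<Union>k\<le>n. ?pairs k)"
    by (rule card_image) (auto simp: inj_on_def)
  also have "\<dots> = (\<Sum>k\<le>n. card (colored_trees A m k) *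
      card (rooted_colored_trees (block_ext A m) M r (n - k)))"
    using disjoint by (simp add: card_UN_disjoint card_cartesian_product
        finite_colored_trees finite_rooted_colored_trees)
  moreover have "card (rooted_colored_trees (block_ext A m) M r n) =
      card (if n = 1 then {leaf r} else {}) + card (case_prod graft ` (\<Union>k\<le>n. ?pairs k))"
    by (subst rooted_block_ext_trees_eq[OF assms], rule card_Un_disjoint) (use fin in auto)
  ultimately show ?thesis
    by simp
qed

lemma FA_nth_0 [simp]: "FA A m $ 0 = 0"
  by (simp add: FA_def tA_eq_card colored_trees_0)

lemma rooted_block_ext_trees_fps:
  assumes "m \<le> r" "r < M"
  shows "Abs_fps (\<lambda>n. of_nat (card (rooted_colored_trees (block_ext A m) M r n))) =
    fps_X / (1 - FA A m)"
proof -
  define H where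
    "H = Abs_fps (\<lambda>n. of_nat (card (rooted_colored_trees (block_ext A m) M r n)) :: rat)"
  have "H = fps_X + FA A m * H"
  proof (rule fps_ext)
    fix n
    show "H $ n = (fps_X + FA A m * H) $ n"
      unfolding H_def by (subst card_rooted_block_ext_trees[OF assms])
        (simp add: FA_def tA_eq_card fps_X_def fps_mult_nth atLeast0AtMost)
  qed
  then have "fps_X = H * (1 - FA A m)"
    by (simp add: algebra_simps)
  moreover have "(1 - FA A m) $ 0 = 1"
    by simp
  then have "1 - FA A m \<noteq> 0"
    by (metis fps_zero_nth zero_neq_one)
  ultimately show ?thesis
    unfolding H_def[symmetric] by (metis nonzero_mult_div_cancel_right)
qed

lemma colored_trees_block_ext_eq:
  assumes "m \<le> M"
  shows "colored_trees (block_ext A m) M n =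
    colored_trees A m n \<union> (\<Union>r\<in>{m..<M}. rooted_colored_trees (block_ext A m) M r n)"
  using assms is_coloring_block_ext_iff[of m M A] is_coloring_root_less[of "block_ext A m" M]
  by (fastforce simp: colored_trees_def rooted_colored_trees_def)

lemma tA_block_ext:
  assumes "m \<le> M"
  shows "tA (block_ext A m) M n =
    tA A m n + (\<Sum>r\<in>{m..<M}. card (rooted_colored_trees (block_ext A m) M r n))"
proof -
  have "colored_trees A m n \<inter> (\<Union>r\<in>{m..<M}. rooted_colored_trees (block_ext A m) M r n) = {}"
    using is_coloring_root_less[of A m]
    by (fastforce simp: colored_trees_def rooted_colored_trees_def)
  moreover have "card (\<Union>r\<in>{m..<M}. rooted_colored_trees (block_ext A m) M r n) =
      (\<Sum>r\<in>{m..<M}. card (rooted_colored_trees (block_ext A m) M r n))"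
    by (rule card_UN_disjoint)
      (simp_all add: finite_rooted_colored_trees, auto simp: rooted_colored_trees_def)
  ultimately show ?thesis
    unfolding tA_eq_card colored_trees_block_ext_eq[OF assms]
    by (simp add: card_Un_disjoint finite_colored_trees finite_rooted_colored_trees)
qed

theorem theorem25:
  fixes A :: "nat \<Rightarrow> nat \<Rightarrow> nat" and m m' :: nat
  assumes "m \<ge> 1"
    and "\<forall>i<m. \<forall>j<m. A i j \<in> {0, 1}"
    and "m' \<ge> 1"
  shows "FA (block_ext A m) (m + m') =
         FA A m + fps_const (of_nat m') * fps_X / (1 - FA A m)"
proof (rule fps_ext)
  fix n
  have rooted: "of_nat (card (rooted_colored_trees (block_ext A m) (m + m') r n)) =
      (fps_X / (1 - FA A m)) $ n" if "m \<le> r" "r < m + m'" for r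
    by (simp flip: rooted_block_ext_trees_fps[OF that])
  have "fps_const (of_nat m') * fps_X / (1 - FA A m) =
      fps_const (of_nat m') * (fps_X / (1 - FA A m))"
    by (simp add: fps_divide_unit mult.assoc)
  then show "FA (block_ext A m) (m + m') $ n =
      (FA A m + fps_const (of_nat m') * fps_X / (1 - FA A m)) $ n"
    by (simp add: FA_def tA_block_ext rooted)
qed

end
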